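(* Let $\alpha,\beta\in\mathbb R$ with $\alpha+\beta>0$, let $\sigma>0$ and $\gamma,\delta>0$. Set $$\gamma_0:=\begin{cases}0&\text{if }\alpha\ge\frac{1}{4\sigma},\\ -\alpha+\frac1{4\sigma}&\text{if }-\frac1{4\sigma}\le\alpha<\frac1{4\sigma},\\ 2\beta-2\sqrt{(\alpha+\beta)(\beta-\frac1{4\sigma})}&\text{if }\alpha<-\frac1{4\sigma}.\end{cases}$$ Then $\gamma_0\ge\max\{0,-\alpha+\frac1{4\sigma}\}$, and the following are equivalent: (i) $\dfrac{4\gamma\delta(1+\gamma\alpha)(1+\delta\beta)-(\gamma+\delta)^2}{2\gamma\delta^2(\alpha+\beta)}-\dfrac{\gamma}{2\sigma}>0$; (ii) $\frac1\gamma>\gamma_0$ and $\max\{0,\frac1\gamma+2\alpha-2\sqrt\Delta\}<\frac1\delta<\frac1\gamma+2\alpha+2\sqrt\Delta$, where $\Delta:=(\alpha+\beta)(\frac1\gamma+\alpha-\frac1{4\sigma})$. Consequently, there always exist $\gamma,\delta>0$ satisfying (i) and (ii). *)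

theory Defs
  imports Complex_Main
begin

definition gamma0 :: "real \<Rightarrow> real \<Rightarrow> real \<Rightarrow> real" where
  "gamma0 \<alpha> \<beta> \<sigma> =
     (if \<alpha> \<ge> 1 / (4 * \<sigma>) then 0
      else if - (1 / (4 * \<sigma>)) \<le> \<alpha> then - \<alpha> + 1 / (4 * \<sigma>)
      else 2 * \<beta> - 2 * sqrt ((\<alpha> + \<beta>) * (\<beta> - 1 / (4 * \<sigma>))))"

definition cond_i :: "real \<Rightarrow> real \<Rightarrow> real \<Rightarrow> real \<Rightarrow> real \<Rightarrow> bool" where
  "cond_i \<alpha> \<beta> \<sigma> \<gamma> \<delta> \<longleftrightarrow>
     (4 * \<gamma> * \<delta> * (1 + \<gamma> * \<alpha>) * (1 + \<delta> * \<beta>) - (\<gamma> + \<delta>)^2)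
       / (2 * \<gamma> * \<delta>^2 * (\<alpha> + \<beta>)) - \<gamma> / (2 * \<sigma>) > 0"

definition Delta :: "real \<Rightarrow> real \<Rightarrow> real \<Rightarrow> real \<Rightarrow> real" where
  "Delta \<alpha> \<beta> \<sigma> \<gamma> = (\<alpha> + \<beta>) * (1 / \<gamma> + \<alpha> - 1 / (4 * \<sigma>))"

definition cond_ii :: "real \<Rightarrow> real \<Rightarrow> real \<Rightarrow> real \<Rightarrow> real \<Rightarrow> bool" where
  "cond_ii \<alpha> \<beta> \<sigma> \<gamma> \<delta> \<longleftrightarrow>
     1 / \<gamma> > gamma0 \<alpha> \<beta> \<sigma> \<and>
     max 0 (1 / \<gamma> + 2 * \<alpha> - 2 * sqrt (Delta \<alpha> \<beta> \<sigma> \<gamma>)) < 1 / \<delta> \<and>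
     1 / \<delta> < 1 / \<gamma> + 2 * \<alpha> + 2 * sqrt (Delta \<alpha> \<beta> \<sigma> \<gamma>)"

end

theory Submission
  imports Defs
begin

text \<open>With \<open>u = 1/\<delta> - 1/\<gamma> - 2\<alpha>\<close>, the quantity in (i) equals \<open>\<gamma> / (2(\<alpha> + \<beta>)) * (4\<Delta> - u\<^sup>2)\<close>,
  so (i) says \<open>\<bar>u\<bar> < 2 sqrt \<Delta>\<close>, i.e. \<open>1/\<delta>\<close> lies strictly between \<open>1/\<gamma> + 2\<alpha> \<plusminus> 2 sqrt \<Delta>\<close>.
  That this interval is nonempty and meets the positive reals is exactly what forces
  \<open>1/\<gamma> > \<gamma>\<^sub>0\<close>: in the third case of \<open>\<gamma>\<^sub>0\<close>, with \<open>x = sqrt (\<alpha> + \<beta>)\<close>,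
  \<open>y = sqrt (\<beta> - 1/(4\<sigma>))\<close> and \<open>z = sqrt (1/\<gamma> + \<alpha> - 1/(4\<sigma>))\<close>, the upper end equals
  \<open>(z + x)\<^sup>2 - y\<^sup>2\<close> while \<open>1/\<gamma> - (2\<beta> - 2xy) = z\<^sup>2 - (y - x)\<^sup>2\<close>.
  Taking \<open>\<delta> = \<gamma>\<close> gives \<open>u = -2\<alpha>\<close>, and \<open>\<alpha>\<^sup>2 < \<Delta>\<close> as soon as \<open>1/\<gamma>\<close> is large.\<close>

lemma cond_i_expression_eq:
  fixes \<alpha> \<beta> \<sigma> \<gamma> \<delta> :: real
  assumes "\<alpha> + \<beta> \<noteq> 0" "\<gamma> \<noteq> 0" "\<delta> \<noteq> 0"
  shows "(4 * \<gamma> * \<delta> * (1 + \<gamma> * \<alpha>) * (1 + \<delta> * \<beta>) - (\<gamma> + \<delta>)^2)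
       / (2 * \<gamma> * \<delta>^2 * (\<alpha> + \<beta>)) - \<gamma> / (2 * \<sigma>)
     = \<gamma> / (2 * (\<alpha> + \<beta>)) * (4 * Delta \<alpha> \<beta> \<sigma> \<gamma> - (1/\<delta> - 1/\<gamma> - 2*\<alpha>)^2)"
proof -
  define N where "N = 4 * \<gamma> * \<delta> * (1 + \<gamma> * \<alpha>) * (1 + \<delta> * \<beta>) - (\<gamma> + \<delta>)^2"
  have "N / (\<gamma>^2 * \<delta>^2) = 4 * (1/\<gamma> + \<alpha>) * (1/\<delta> + \<beta>) - (1/\<gamma> + 1/\<delta>)^2"
    using assms unfolding N_def by (simp add: field_simps power2_eq_square)
  also have "\<dots> = 4 * (\<alpha> + \<beta>) * (1/\<gamma> + \<alpha>) - (1/\<delta> - 1/\<gamma> - 2*\<alpha>)^2"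
    using assms by (simp add: field_simps power2_eq_square)
  also have "\<dots> - (\<alpha> + \<beta>) / \<sigma> = 4 * Delta \<alpha> \<beta> \<sigma> \<gamma> - (1/\<delta> - 1/\<gamma> - 2*\<alpha>)^2"
    unfolding Delta_def by (simp add: algebra_simps add_divide_distrib)
  finally have "N / (\<gamma>^2 * \<delta>^2) - (\<alpha> + \<beta>) / \<sigma>
      = 4 * Delta \<alpha> \<beta> \<sigma> \<gamma> - (1/\<delta> - 1/\<gamma> - 2*\<alpha>)^2" .
  moreover have "\<gamma> / (2 * (\<alpha> + \<beta>)) * (N / (\<gamma>^2 * \<delta>^2)) = N / (2 * \<gamma> * \<delta>^2 * (\<alpha> + \<beta>))"
    using assms by (simp add: power2_eq_square)
  moreover have "\<gamma> / (2 * (\<alpha> + \<beta>)) * ((\<alpha> + \<beta>) / \<sigma>) = \<gamma> / (2 * \<sigma>)"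
    using assms(1) by (simp add: divide_simps mult.assoc)
  ultimately show ?thesis
    unfolding N_def[symmetric] by (metis right_diff_distrib)
qed

lemma cond_i_iff_square_less_Delta:
  fixes \<alpha> \<beta> \<sigma> \<gamma> \<delta> :: real
  assumes "\<alpha> + \<beta> > 0" "\<gamma> > 0" "\<delta> > 0"
  shows "cond_i \<alpha> \<beta> \<sigma> \<gamma> \<delta> \<longleftrightarrow> (1/\<delta> - 1/\<gamma> - 2*\<alpha>)^2 < 4 * Delta \<alpha> \<beta> \<sigma> \<gamma>"
proof -
  have "\<gamma> / (2 * (\<alpha> + \<beta>)) > 0" using assms by simp
  moreover have "cond_i \<alpha> \<beta> \<sigma> \<gamma> \<delta> \<longleftrightarrow>
      \<gamma> / (2 * (\<alpha> + \<beta>)) * (4 * Delta \<alpha> \<beta> \<sigma> \<gamma> - (1/\<delta> - 1/\<gamma> - 2*\<alpha>)^2) > 0"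
    unfolding cond_i_def using assms by (subst cond_i_expression_eq) auto
  ultimately show ?thesis by (metis diff_gt_0_iff_gt zero_less_mult_iff less_asym)
qed

lemma square_less_four_iff:
  fixes u D :: real
  shows "u^2 < 4 * D \<longleftrightarrow> - 2 * sqrt D < u \<and> u < 2 * sqrt D"
proof -
  have "u^2 < 4 * D \<longleftrightarrow> sqrt (u^2) < sqrt (4 * D)" by (rule real_sqrt_less_iff[symmetric])
  also have "\<dots> \<longleftrightarrow> \<bar>u\<bar> < 2 * sqrt D" by (simp add: real_sqrt_mult)
  finally show ?thesis by auto
qed

lemma cond_i_iff_interval:
  fixes \<alpha> \<beta> \<sigma> \<gamma> \<delta> :: real
  assumes "\<alpha> + \<beta> > 0" "\<gamma> > 0" "\<delta> > 0"
  shows "cond_i \<alpha> \<beta> \<sigma> \<gamma> \<delta> \<longleftrightarrow>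
    1/\<gamma> + 2*\<alpha> - 2 * sqrt (Delta \<alpha> \<beta> \<sigma> \<gamma>) < 1/\<delta> \<and>
    1/\<delta> < 1/\<gamma> + 2*\<alpha> + 2 * sqrt (Delta \<alpha> \<beta> \<sigma> \<gamma>)"
  unfolding cond_i_iff_square_less_Delta[OF assms] square_less_four_iff by auto

lemma two_beta_minus_sqrt_ge:
  fixes \<alpha> \<beta> c :: real
  assumes "\<alpha> + \<beta> \<ge> 0" "\<beta> \<ge> c"
  shows "- \<alpha> + c \<le> 2 * \<beta> - 2 * sqrt ((\<alpha> + \<beta>) * (\<beta> - c))"
proof -
  define x y where "x = sqrt (\<alpha> + \<beta>)" and "y = sqrt (\<beta> - c)"
  have "x^2 = \<alpha> + \<beta>" "y^2 = \<beta> - c" using assms by (simp_all add: x_def y_def)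
  moreover have "sqrt ((\<alpha> + \<beta>) * (\<beta> - c)) = x * y" by (simp add: x_def y_def real_sqrt_mult)
  ultimately have "2 * \<beta> - 2 * sqrt ((\<alpha> + \<beta>) * (\<beta> - c)) - (- \<alpha> + c) = (x - y)^2"
    by (simp add: power2_eq_square algebra_simps)
  then show ?thesis by (metis diff_ge_0_iff_ge zero_le_power2)
qed

lemma two_beta_minus_sqrt_less:
  fixes \<alpha> \<beta> c g :: real
  assumes "\<alpha> + \<beta> > 0" "\<alpha> < - c" "g + \<alpha> > c"
    and "0 < g + 2 * \<alpha> + 2 * sqrt ((\<alpha> + \<beta>) * (g + \<alpha> - c))"
  shows "2 * \<beta> - 2 * sqrt ((\<alpha> + \<beta>) * (\<beta> - c)) < g"
proof -
  define x y z where "x = sqrt (\<alpha> + \<beta>)" and "y = sqrt (\<beta> - c)" and "z = sqrt (g + \<alpha> - c)"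
  have sq: "x^2 = \<alpha> + \<beta>" "y^2 = \<beta> - c" "z^2 = g + \<alpha> - c"
    using assms by (simp_all add: x_def y_def z_def)
  have "x > 0" "z \<ge> 0" "y > x" using assms by (simp_all add: x_def y_def z_def)
  have "sqrt ((\<alpha> + \<beta>) * (g + \<alpha> - c)) = x * z" by (simp add: x_def z_def real_sqrt_mult)
  then have "g + 2 * \<alpha> + 2 * sqrt ((\<alpha> + \<beta>) * (g + \<alpha> - c)) = (z + x)^2 - y^2"
    using sq by (simp add: power2_eq_square algebra_simps)
  then have "y^2 < (z + x)^2" using assms(4) by simp
  then have "y < z + x" by (rule power_less_imp_less_base) (use \<open>x > 0\<close> \<open>z \<ge> 0\<close> in simp)
  then have "(y - x)^2 < z^2" using \<open>y > x\<close> by (simp add: power_strict_mono)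
  moreover have "sqrt ((\<alpha> + \<beta>) * (\<beta> - c)) = x * y" by (simp add: x_def y_def real_sqrt_mult)
  ultimately show ?thesis using sq by (simp add: power2_eq_square algebra_simps)
qed

lemma gamma0_ge_max:
  fixes \<alpha> \<beta> \<sigma> :: real
  assumes "\<alpha> + \<beta> > 0" "\<sigma> > 0"
  shows "gamma0 \<alpha> \<beta> \<sigma> \<ge> max 0 (- \<alpha> + 1 / (4 * \<sigma>))"
  using assms two_beta_minus_sqrt_ge[of \<alpha> \<beta> "1 / (4 * \<sigma>)"]
  unfolding gamma0_def by auto

lemma gamma0_less:
  fixes \<alpha> \<beta> \<sigma> g :: real
  assumes "\<alpha> + \<beta> > 0" "g > 0" "g + \<alpha> > 1 / (4 * \<sigma>)"
    and "0 < g + 2 * \<alpha> + 2 * sqrt ((\<alpha> + \<beta>) * (g + \<alpha> - 1 / (4 * \<sigma>)))"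
  shows "gamma0 \<alpha> \<beta> \<sigma> < g"
  using assms two_beta_minus_sqrt_less[of \<alpha> \<beta> "1 / (4 * \<sigma>)" g]
  unfolding gamma0_def by auto

lemma cond_i_iff_cond_ii:
  fixes \<alpha> \<beta> \<sigma> \<gamma> \<delta> :: real
  assumes "\<alpha> + \<beta> > 0" "\<gamma> > 0" "\<delta> > 0"
  shows "cond_i \<alpha> \<beta> \<sigma> \<gamma> \<delta> \<longleftrightarrow> cond_ii \<alpha> \<beta> \<sigma> \<gamma> \<delta>"
proof
  have "1/\<delta> > 0" using assms(3) by simp
  assume "cond_i \<alpha> \<beta> \<sigma> \<gamma> \<delta>"
  then have lower: "1/\<gamma> + 2*\<alpha> - 2 * sqrt (Delta \<alpha> \<beta> \<sigma> \<gamma>) < 1/\<delta>"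
    and upper: "1/\<delta> < 1/\<gamma> + 2*\<alpha> + 2 * sqrt (Delta \<alpha> \<beta> \<sigma> \<gamma>)"
    using cond_i_iff_interval[OF assms] by auto
  then have "sqrt (Delta \<alpha> \<beta> \<sigma> \<gamma>) > 0" by linarith
  then have "Delta \<alpha> \<beta> \<sigma> \<gamma> > 0" by simp
  then have "1/\<gamma> + \<alpha> > 1 / (4 * \<sigma>)"
    using assms(1) unfolding Delta_def by (simp add: zero_less_mult_iff)
  moreover have "0 < 1/\<gamma> + 2*\<alpha> + 2 * sqrt ((\<alpha> + \<beta>) * (1/\<gamma> + \<alpha> - 1 / (4 * \<sigma>)))"
    using upper \<open>1/\<delta> > 0\<close> unfolding Delta_def by linarith
  ultimately have "gamma0 \<alpha> \<beta> \<sigma> < 1/\<gamma>"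
    using gamma0_less assms by simp
  with lower upper \<open>1/\<delta> > 0\<close> show "cond_ii \<alpha> \<beta> \<sigma> \<gamma> \<delta>"
    unfolding cond_ii_def by simp
next
  assume "cond_ii \<alpha> \<beta> \<sigma> \<gamma> \<delta>"
  then show "cond_i \<alpha> \<beta> \<sigma> \<gamma> \<delta>"
    unfolding cond_ii_def cond_i_iff_interval[OF assms] by simp
qed

lemma cond_i_exists:
  fixes \<alpha> \<beta> \<sigma> :: real
  assumes "\<alpha> + \<beta> > 0"
  obtains \<gamma> where "\<gamma> > 0" "cond_i \<alpha> \<beta> \<sigma> \<gamma> \<gamma>"
proof -
  define c where "c = 1 / (4 * \<sigma>)"
  define g where "g = \<bar>c - \<alpha> + \<alpha>^2 / (\<alpha> + \<beta>)\<bar> + 1"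
  have "g > 0" by (simp add: g_def add_nonneg_pos)
  have "\<alpha>^2 / (\<alpha> + \<beta>) < g + \<alpha> - c" unfolding g_def by linarith
  then have "(2*\<alpha>)^2 < 4 * Delta \<alpha> \<beta> \<sigma> (1/g)"
    using assms unfolding Delta_def c_def[symmetric] by (simp add: field_simps power2_eq_square)
  then have "cond_i \<alpha> \<beta> \<sigma> (1/g) (1/g)"
    using cond_i_iff_square_less_Delta[OF assms] \<open>g > 0\<close> by simp
  with \<open>g > 0\<close> show ?thesis using that[of "1/g"] by simp
qed

theorem lemma4p4:
  fixes \<alpha> \<beta> \<sigma> :: real
  assumes "\<alpha> + \<beta> > 0" and "\<sigma> > 0"
  shows "gamma0 \<alpha> \<beta> \<sigma> \<ge> max 0 (- \<alpha> + 1 / (4 * \<sigma>))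
    \<and> (\<forall>\<gamma> \<delta>. \<gamma> > 0 \<longrightarrow> \<delta> > 0 \<longrightarrow> (cond_i \<alpha> \<beta> \<sigma> \<gamma> \<delta> \<longleftrightarrow> cond_ii \<alpha> \<beta> \<sigma> \<gamma> \<delta>))
    \<and> (\<exists>\<gamma> \<delta>. \<gamma> > 0 \<and> \<delta> > 0 \<and> cond_i \<alpha> \<beta> \<sigma> \<gamma> \<delta> \<and> cond_ii \<alpha> \<beta> \<sigma> \<gamma> \<delta>)"
proof -
  obtain \<gamma> where "\<gamma> > 0" "cond_i \<alpha> \<beta> \<sigma> \<gamma> \<gamma>"
    using cond_i_exists[OF assms(1)] .
  then have "cond_ii \<alpha> \<beta> \<sigma> \<gamma> \<gamma>"
    using cond_i_iff_cond_ii[OF assms(1)] by blast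
  then show ?thesis
    using gamma0_ge_max[OF assms] cond_i_iff_cond_ii[OF assms(1)] \<open>\<gamma> > 0\<close> \<open>cond_i \<alpha> \<beta> \<sigma> \<gamma> \<gamma>\<close>
    by blast
qed

end
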